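(* For every integer $n$, \[ \sum_{k = (1 + ( - 1)^n )/2}^n ( - 1)^{k - 1} L_k^{\,4} = ( - 1)^{n - 1} \frac{5}{3}F_n F_{n + 1} \left(L_{n - 2} L_{n + 3} + ( - 1)^n 2\right)\,. \] (Here the summation starts at $k=1$ if $n$ is even and at $k=0$ if $n$ is odd.)
   Context: $F_i$ and $L_i$ denote the Fibonacci and Lucas numbers, defined for all $i\in\mathbb{Z}$ by $F_i=F_{i-1}+F_{i-2}$, $F_0=0$, $F_1=1$, and $L_i=L_{i-1}+L_{i-2}$, $L_0=2$, $L_1=1$; equivalently $F_{-i}=(-1)^{i-1}F_i$ and $L_{-i}=(-1)^iL_i$. Summation convention for an arbitrary integer upper limit: $\sum_{k=a}^{a-1} f(k)=0$, and for $n<a-1$, $\sum_{k=a}^{n} f(k) = -\sum_{k=n+1}^{a-1} f(k)$. *)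

theory Defs
  imports Complex_Main
begin

fun fibn :: "nat \<Rightarrow> int" where
  "fibn 0 = 0" | "fibn (Suc 0) = 1" | "fibn (Suc (Suc n)) = fibn (Suc n) + fibn n"

fun lucn :: "nat \<Rightarrow> int" where
  "lucn 0 = 2" | "lucn (Suc 0) = 1" | "lucn (Suc (Suc n)) = lucn (Suc n) + lucn n"

definition F :: "int \<Rightarrow> int" where
  "F i = (if i \<ge> 0 then fibn (nat i) else (-1) ^ (nat (-i) + 1) * fibn (nat (-i)))"

definition L :: "int \<Rightarrow> int" where
  "L i = (if i \<ge> 0 then lucn (nat i) else (-1) ^ (nat (-i)) * lucn (nat (-i)))"

definition gsum :: "int \<Rightarrow> int \<Rightarrow> (int \<Rightarrow> 'a::ab_group_add) \<Rightarrow> 'a" where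
  "gsum a n f = (if n \<ge> a - 1 then (\<Sum>k\<in>{a..n}. f k) else - (\<Sum>k\<in>{n+1..a-1}. f k))"

end

theory Submission
  imports Defs
begin

text \<open>Write R(n) for the right-hand side and put a = F(n), b = F(n+1), s = (-1)^n.
  Since L(n), L(n-2), L(n+3) and F(n-1) are integer linear combinations of a and b, the
  difference R(n) - R(n-1) is a polynomial in a, b, s, and it equals s (16 - L(n)^4) modulo
  Cassini's identity b^2 - a b - a^2 = s.  So R(n) + 8 (1 - (-1)^n) has the summand
  (-1)^(k-1) L(k)^4 as its first difference and the sum telescopes.  The correction term is
  what makes one closed form serve both starting points k = 1 (n even) and k = 0 (n odd),
  R being zero at 0 and -1.  The linear identities between shifted Lucas and Fibonacci
  numbers all follow the same way: both sides satisfy the Fibonacci recurrence on all of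
  the integers and agree at 0 and 1.\<close>

definition fib_recurrent :: "(int \<Rightarrow> 'a::ab_group_add) \<Rightarrow> bool" where
  "fib_recurrent f \<longleftrightarrow> (\<forall>i. f (i + 2) = f (i + 1) + f i)"

lemma int_cases_minus_one:
  fixes i :: int
  obtains (ge) m where "i = int m - 1" | (lt) k where "i = - int k - 2"
proof (cases "i \<ge> -1")
  case True
  then have "i = int (nat (i + 1)) - 1" by simp
  then show ?thesis by (rule ge)
next
  case False
  then have "i = - int (nat (- i - 2)) - 2" by simp
  then show ?thesis by (rule lt)
qed

lemma fib_recurrent_F: "fib_recurrent F"
  unfolding fib_recurrent_def
proof
  fix i :: int
  show "F (i + 2) = F (i + 1) + F i"
  proof (cases i rule: int_cases_minus_one)
    case (ge m)
    then show ?thesis by (cases m) (auto simp: F_def nat_add_distrib)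
  next
    case (lt k)
    then show ?thesis
      by (cases k; simp add: F_def nat_add_distrib eval_nat_numeral; simp add: algebra_simps)
  qed
qed

lemma fib_recurrent_L: "fib_recurrent L"
  unfolding fib_recurrent_def
proof
  fix i :: int
  show "L (i + 2) = L (i + 1) + L i"
  proof (cases i rule: int_cases_minus_one)
    case (ge m)
    then show ?thesis by (cases m) (auto simp: L_def nat_add_distrib)
  next
    case (lt k)
    then show ?thesis
      by (cases k; simp add: L_def nat_add_distrib eval_nat_numeral; simp add: algebra_simps)
  qed
qed

lemma fib_recurrent_shift: "fib_recurrent f \<Longrightarrow> fib_recurrent (\<lambda>i. f (i + k))"
  unfolding fib_recurrent_def by (metis add.commute add.left_commute)

lemma fib_recurrent_diff:
  "fib_recurrent f \<Longrightarrow> fib_recurrent g \<Longrightarrow> fib_recurrent (\<lambda>i. f i - g i)"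
  unfolding fib_recurrent_def by (simp add: algebra_simps)

lemma fib_recurrent_add:
  "fib_recurrent f \<Longrightarrow> fib_recurrent g \<Longrightarrow> fib_recurrent (\<lambda>i. f i + g i)"
  unfolding fib_recurrent_def by (simp add: algebra_simps)

lemma fib_recurrent_scale:
  fixes f :: "int \<Rightarrow> 'a::ring"
  shows "fib_recurrent f \<Longrightarrow> fib_recurrent (\<lambda>i. c * f i)"
  unfolding fib_recurrent_def by (simp add: distrib_left)

lemma fib_recurrent_pred:
  assumes "fib_recurrent f"
  shows "f (i - 1) = f (i + 1) - f i"
proof -
  have "f (i - 1 + 2) = f (i - 1 + 1) + f (i - 1)"
    using assms unfolding fib_recurrent_def by blast
  then show ?thesis by (simp add: algebra_simps)
qed

lemma fib_recurrent_eqI: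
  assumes f: "fib_recurrent f" and g: "fib_recurrent g" and "f 0 = g 0" "f 1 = g 1"
  shows "f = g"
proof
  fix n :: int
  have "f n = g n \<and> f (n + 1) = g (n + 1)"
  proof (induction n rule: int_induct[where k = 0])
    case base
    then show ?case using assms(3,4) by simp
  next
    case (step1 i)
    then show ?case
      using f g unfolding fib_recurrent_def by (metis add.assoc one_add_one)
  next
    case (step2 i)
    then show ?case
      using fib_recurrent_pred[OF f, of i] fib_recurrent_pred[OF g, of i] by simp
  qed
  then show "f n = g n" ..
qed

lemma L_eq_F: "L i = 2 * F (i + 1) - F i"
proof -
  have "L = (\<lambda>i. 2 * F (i + 1) - F i)"
    by (intro fib_recurrent_eqI fib_recurrent_L fib_recurrent_F fib_recurrent_add
        fib_recurrent_diff fib_recurrent_scale fib_recurrent_shift)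
      (simp_all add: L_def F_def eval_nat_numeral)
  then show ?thesis by (rule fun_cong)
qed

lemma L_minus_2_eq_F: "L (i - 2) = 3 * F (i + 1) - 4 * F i"
proof -
  have "(\<lambda>i. L (i + -2)) = (\<lambda>i. 3 * F (i + 1) - 4 * F i)"
    by (intro fib_recurrent_eqI fib_recurrent_L fib_recurrent_F fib_recurrent_add
        fib_recurrent_diff fib_recurrent_scale fib_recurrent_shift)
      (simp_all add: L_def F_def eval_nat_numeral)
  then show ?thesis by (metis diff_conv_add_uminus)
qed

lemma L_plus_3_eq_F: "L (i + 3) = 3 * F i + 4 * F (i + 1)"
proof -
  have "(\<lambda>i. L (i + 3)) = (\<lambda>i. 3 * F i + 4 * F (i + 1))"
    by (intro fib_recurrent_eqI fib_recurrent_L fib_recurrent_F fib_recurrent_add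
        fib_recurrent_diff fib_recurrent_scale fib_recurrent_shift)
      (simp_all add: L_def F_def eval_nat_numeral)
  then show ?thesis by (rule fun_cong)
qed

lemma F_cassini: "F (n + 1) ^ 2 - F (n + 1) * F n - F n ^ 2 = (if even n then 1 else -1)"
proof (induction n rule: int_induct[where k = 0])
  case base
  then show ?case by (simp add: F_def)
next
  case (step1 i)
  have "F (i + 2) = F (i + 1) + F i"
    using fib_recurrent_F unfolding fib_recurrent_def by blast
  then show ?case using step1(2) by (simp add: algebra_simps power2_eq_square)
next
  case (step2 i)
  have "F (i + 1) = F i + F (i - 1)"
    using fib_recurrent_pred[OF fib_recurrent_F, of i] by simp
  then show ?case using step2(2) by (simp add: algebra_simps power2_eq_square)
qed

lemma gsum_upper_step: "gsum a n f = gsum a (n - 1) f + f n"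
proof -
  consider "n \<ge> a" | "n = a - 1" | "n < a - 1" by linarith
  then show ?thesis
  proof cases
    case 1
    then have "{a..n} = insert n {a..n - 1}" by auto
    with 1 show ?thesis by (simp add: gsum_def add.commute)
  next
    case 2
    then show ?thesis by (simp add: gsum_def)
  next
    case 3
    then have "{n..a - 1} = insert n {n + 1..a - 1}" by auto
    with 3 show ?thesis by (simp add: gsum_def)
  qed
qed

lemma gsum_telescope:
  assumes "\<And>k. g k - g (k - 1) = f k"
  shows "gsum a n f = g n - g (a - 1)"
proof (induction n rule: int_induct[where k = "a - 1"])
  case base
  then show ?case by (simp add: gsum_def)
next
  case (step1 i)
  then show ?case
    using gsum_upper_step[of a "i + 1" f] assms[of "i + 1"] by (simp add: algebra_simps)
next
  case (step2 i)
  then show ?case using gsum_upper_step[of a i f] assms[of i] by (simp add: algebra_simps)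
qed

definition alt_L4_sum_closed :: "int \<Rightarrow> real" where
  "alt_L4_sum_closed n =
     (-1::real) powi (n - 1) * (5 / 3) * real_of_int (F n) * real_of_int (F (n + 1))
       * (real_of_int (L (n - 2)) * real_of_int (L (n + 3)) + (-1::real) powi n * 2)"

lemma alt_L4_sum_closed_in_F:
  fixes n :: int
  defines "a \<equiv> real_of_int (F n)" and "b \<equiv> real_of_int (F (n + 1))"
    and "s \<equiv> (-1::real) powi n"
  shows "alt_L4_sum_closed n
    = - s * (5 / 3) * a * b * ((3 * b - 4 * a) * (3 * a + 4 * b) + 2 * s)"
  unfolding alt_L4_sum_closed_def assms L_minus_2_eq_F L_plus_3_eq_F
  by (simp add: power_int_diff)

lemma alt_L4_sum_closed_diff:
  "alt_L4_sum_closed n - alt_L4_sum_closed (n - 1)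
    = (-1::real) powi n * (16 - real_of_int (L n) ^ 4)"
proof -
  define a b s
    where "a = real_of_int (F n)" and "b = real_of_int (F (n + 1))" and "s = (-1::real) powi n"
  have F_pred: "real_of_int (F (n - 1)) = b - a"
    unfolding a_def b_def fib_recurrent_pred[OF fib_recurrent_F] by simp
  have L_n: "real_of_int (L n) = 2 * b - a"
    unfolding a_def b_def L_eq_F by simp
  have cassini: "s = b ^ 2 - a * b - a ^ 2"
    using arg_cong[OF F_cassini[of n], of real_of_int]
    by (simp add: a_def b_def s_def power_int_minus_left algebra_simps split: if_splits)
  have closed_pred: "alt_L4_sum_closed (n - 1)
      = s * (5 / 3) * (b - a) * a * ((7 * a - 4 * b) * (a + 3 * b) - 2 * s)"
    using alt_L4_sum_closed_in_F[of "n - 1"]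
    by (simp add: a_def b_def s_def F_pred power_int_diff algebra_simps)
  have "s ^ 2 = 1" unfolding s_def by (simp add: power2_eq_square)
  then have "- s * (5 / 3) * a * b * ((3 * b - 4 * a) * (3 * a + 4 * b) + 2 * s)
      - s * (5 / 3) * (b - a) * a * ((7 * a - 4 * b) * (a + 3 * b) - 2 * s)
      = s * (16 - (2 * b - a) ^ 4)"
    using cassini by algebra
  then show ?thesis
    using alt_L4_sum_closed_in_F[of n] closed_pred
    by (simp add: a_def b_def s_def L_n)
qed

theorem corollary4:
  fixes n :: int
  shows "gsum ((1 + (-1) ^ nat \<bar>n\<bar>) div 2) n
           (\<lambda>k. (-1::real) powi (k - 1) * real_of_int (L k) ^ 4)
    = (-1::real) powi (n - 1) * (5 / 3) * real_of_int (F n) * real_of_int (F (n + 1))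
        * (real_of_int (L (n - 2)) * real_of_int (L (n + 3)) + (-1::real) powi n * 2)"
proof -
  define g where "g k = alt_L4_sum_closed k + 8 * (1 - (-1::real) powi k)" for k
  have "g k - g (k - 1) = (-1::real) powi (k - 1) * real_of_int (L k) ^ 4" for k
    using alt_L4_sum_closed_diff[of k] by (simp add: g_def power_int_diff algebra_simps)
  then have telescoped: "gsum a n (\<lambda>k. (-1::real) powi (k - 1) * real_of_int (L k) ^ 4)
      = g n - g (a - 1)" for a
    by (rule gsum_telescope)
  have start: "(1 + (-1) ^ nat \<bar>n\<bar>) div 2 = (if even n then 1 else 0 :: int)"
    by (simp add: even_nat_iff)
  have "alt_L4_sum_closed 0 = 0" "alt_L4_sum_closed (-1) = 0"
    by (simp_all add: alt_L4_sum_closed_def F_def)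
  then show ?thesis
    unfolding telescoped start alt_L4_sum_closed_def[symmetric]
    by (simp add: g_def power_int_minus_left)
qed

end
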